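(* Let $0<p<1$ and let $k\ge 1$ be an integer. A coin showing heads with probability $p$ and tails with probability $1-p$ is flipped independently until $k$ consecutive heads first appear; let $Y$ be the number of flips. Then \[ E(Y) = p^{-1}+p^{-2}+\cdots+p^{-k} = \frac{1-p^k}{(1-p)p^k},\qquad E(Y^2) = \frac{2(1-p^k)}{(1-p)^2 p^{2k}} - \frac{2k+1-p^k}{(1-p)p^k}, \] \[ E(Y^3) = \frac{6(1-p^k)}{(1-p)^3 p^{3k}} - \frac{12k+6-(6k+6)p^k}{(1-p)^2 p^{2k}} + \frac{3k^2+3k+1-p^k}{(1-p)p^k}, \] \[ E(Y^4) = \frac{24(1-p^k)}{(1-p)^4 p^{4k}} - \frac{72k+36-(48k+36)p^k}{(1-p)^3 p^{3k}} + \frac{48k^2+48k+14-(12k^2+24k+14)p^k}{(1-p)^2 p^{2k}} - \frac{4k^3+6k^2+4k+1-p^k}{(1-p) p^k}. \] *)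

theory Defs
  imports "HOL-Probability.Probability"
begin

text \<open>An outcome is an infinite stream of coin flips; True = heads.
  Flips are indexed 0,1,2,...; the value is the number of flips n performed
  when k consecutive heads first appear, i.e. the least n with n \<ge> k such
  that flips n-k, ..., n-1 are all heads.\<close>
definition run_time :: "nat \<Rightarrow> bool stream \<Rightarrow> nat" where
  "run_time k \<omega> = (LEAST n. k \<le> n \<and> (\<forall>i\<in>{n-k..<n}. \<omega> !! i))"

definition coin_space :: "real \<Rightarrow> bool stream measure" where
  "coin_space p = stream_space (measure_pmf (bernoulli_pmf p))"

end

theory Submission
  imports Defs
begin

text \<open>
  First-step analysis. Split the flips into blocks ending at the first tail: if the first
  tail comes at flip i + 1 with i < k, the experiment restarts afresh after it; otherwise
  the first k flips are heads and Y = k. With \<tau> the position of the first tail and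
  Y' an independent copy of Y,
    E (Y^m) = E ((\<tau> + Y')^m; \<tau> \<le> k) + p^k k^m,
  and the binomial expansion turns this into the triangular system
    p^k E (Y^m) = p^k k^m + \<Sum>l<m. (m choose l) E (\<tau>^(m-l); \<tau> \<le> k) E (Y^l).
  The moments must first be shown finite, which is done by running the same argument for
  the truncations min Y N; afterwards the system is solved for m \<le> 4.\<close>

lemma measurable_shift_coin_space[measurable]:
  "(\<lambda>\<omega>. xs @- \<omega>) \<in> measurable (coin_space p) (coin_space p)"
proof (induction xs)
  case (Cons x xs)
  then have "(\<lambda>\<omega>. x ## (xs @- \<omega>)) \<in> measurable (coin_space p) (coin_space p)"
    unfolding coin_space_def by (intro measurable_Stream) auto
  then show ?case by simp
qed simp

lemma measurable_snth_coin_space[measurable]: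
  "Measurable.pred (coin_space p) (\<lambda>\<omega>. \<omega> !! i)"
  unfolding coin_space_def
  using measurable_snth[of i "measure_pmf (bernoulli_pmf p)"] by (simp add: measurable_cong_sets)

lemma prob_space_coin_space: "prob_space (coin_space p)"
  unfolding coin_space_def by (rule prob_space.prob_space_stream_space[OF prob_space_measure_pmf])

lemma nn_integral_coin_space:
  assumes "0 \<le> p" "p \<le> 1" and [measurable]: "G \<in> borel_measurable (coin_space p)"
  shows "(\<integral>\<^sup>+\<omega>. G \<omega> \<partial>coin_space p) =
    ennreal p * (\<integral>\<^sup>+\<omega>. G (True ## \<omega>) \<partial>coin_space p)
    + ennreal (1 - p) * (\<integral>\<^sup>+\<omega>. G (False ## \<omega>) \<partial>coin_space p)"
  using assms unfolding coin_space_def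
  by (subst prob_space.nn_integral_stream_space[OF prob_space_measure_pmf])
     (auto simp: coin_space_def mult.commute)

lemma nn_integral_coin_space_heads_prefix:
  assumes "0 \<le> p" "p \<le> 1" and [measurable]: "G \<in> borel_measurable (coin_space p)"
  shows "(\<integral>\<^sup>+\<omega>. G \<omega> \<partial>coin_space p) =
    (\<Sum>i<j. ennreal (p ^ i * (1 - p)) * (\<integral>\<^sup>+\<omega>. G (replicate i True @- False ## \<omega>) \<partial>coin_space p))
    + ennreal (p ^ j) * (\<integral>\<^sup>+\<omega>. G (replicate j True @- \<omega>) \<partial>coin_space p)"
proof (induction j)
  case (Suc j)
  have "(\<lambda>\<omega>. G (replicate j True @- \<omega>)) \<in> borel_measurable (coin_space p)"
    by measurable
  moreover have "replicate j True @- True ## \<omega> = True ## replicate j True @- \<omega>" for \<omega>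
    by (induction j) auto
  ultimately have "(\<integral>\<^sup>+\<omega>. G (replicate j True @- \<omega>) \<partial>coin_space p) =
      ennreal p * (\<integral>\<^sup>+\<omega>. G (replicate (Suc j) True @- \<omega>) \<partial>coin_space p)
      + ennreal (1 - p) * (\<integral>\<^sup>+\<omega>. G (replicate j True @- False ## \<omega>) \<partial>coin_space p)"
    using nn_integral_coin_space[OF assms(1,2)] by simp
  then show ?case
    unfolding Suc.IH using assms(1,2)
    by (simp add: distrib_left ennreal_mult' mult.assoc[symmetric] add_ac mult.commute)
qed simp

definition heads_run_ends_at :: "nat \<Rightarrow> nat \<Rightarrow> bool stream \<Rightarrow> bool" where
  "heads_run_ends_at k n \<omega> \<longleftrightarrow> k \<le> n \<and> (\<forall>i\<in>{n-k..<n}. \<omega> !! i)"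

lemma run_time_eq_Least: "run_time k \<omega> = (LEAST n. heads_run_ends_at k n \<omega>)"
  by (simp add: run_time_def heads_run_ends_at_def)

text \<open>Unlike run_time, which is 0 on the null set of outcomes without a run of k heads,
  the waiting time is \<open>\<infinity>\<close> there; this makes the first-step identities below hold everywhere.\<close>

definition waiting_time :: "nat \<Rightarrow> bool stream \<Rightarrow> ennreal" where
  "waiting_time k \<omega> =
    (if \<exists>n. heads_run_ends_at k n \<omega> then ennreal (real (run_time k \<omega>)) else \<infinity>)"

lemma measurable_heads_run_ends_at[measurable]: "Measurable.pred (coin_space p) (heads_run_ends_at k n)"
  unfolding heads_run_ends_at_def by measurable

lemma measurable_run_time[measurable]:
  "run_time k \<in> measurable (coin_space p) (count_space UNIV)"
  unfolding run_time_eq_Least by measurable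

lemma measurable_waiting_time[measurable]: "waiting_time k \<in> borel_measurable (coin_space p)"
  unfolding waiting_time_def by measurable

lemma snth_heads_tail_shift:
  "(replicate i True @- False ## \<omega>) !! j =
    (if j < i then True else if j = i then False else \<omega> !! (j - Suc i))"
  by (cases "i < j") (auto simp: shift_snth dest!: less_imp_Suc_add)

lemma heads_run_ends_at_heads_tail_shift:
  assumes "i < k"
  shows "heads_run_ends_at k n (replicate i True @- False ## \<omega>) \<longleftrightarrow>
    Suc i \<le> n \<and> heads_run_ends_at k (n - Suc i) \<omega>"
proof
  assume "heads_run_ends_at k n (replicate i True @- False ## \<omega>)"
  then have "k \<le> n" and window: "\<And>j. n - k \<le> j \<Longrightarrow> j < n \<Longrightarrow> (replicate i True @- False ## \<omega>) !! j"
    unfolding heads_run_ends_at_def Ball_def atLeastLessThan_iff by blast+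
  have "Suc i + k \<le> n"
  proof (rule ccontr)
    assume "\<not> Suc i + k \<le> n"
    then have "n - k \<le> i" "i < n"
      using \<open>k \<le> n\<close> assms by linarith+
    from window[OF this] show False
      unfolding snth_heads_tail_shift by simp
  qed
  moreover have "\<omega> !! j" if "n - Suc i - k \<le> j" "j < n - Suc i" for j
  proof -
    have "n - k \<le> j + Suc i" "j + Suc i < n"
      using that \<open>Suc i + k \<le> n\<close> by linarith+
    from window[OF this] show ?thesis
      unfolding snth_heads_tail_shift by simp
  qed
  ultimately show "Suc i \<le> n \<and> heads_run_ends_at k (n - Suc i) \<omega>"
    unfolding heads_run_ends_at_def Ball_def atLeastLessThan_iff by simp
next
  assume "Suc i \<le> n \<and> heads_run_ends_at k (n - Suc i) \<omega>"
  then have "k \<le> n - Suc i" and window: "\<And>j. n - Suc i - k \<le> j \<Longrightarrow> j < n - Suc i \<Longrightarrow> \<omega> !! j"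
    unfolding heads_run_ends_at_def Ball_def atLeastLessThan_iff by blast+
  have "(replicate i True @- False ## \<omega>) !! j" if "n - k \<le> j" "j < n" for j
  proof -
    have "\<omega> !! (j - Suc i)"
      by (rule window) (use that \<open>k \<le> n - Suc i\<close> in linarith)+
    moreover have "Suc i \<le> j"
      using that \<open>k \<le> n - Suc i\<close> by linarith
    ultimately show ?thesis
      unfolding snth_heads_tail_shift by simp
  qed
  moreover have "k \<le> n"
    using \<open>k \<le> n - Suc i\<close> by simp
  ultimately show "heads_run_ends_at k n (replicate i True @- False ## \<omega>)"
    unfolding heads_run_ends_at_def Ball_def atLeastLessThan_iff by blast
qed

lemma Least_eq_add_Least:
  fixes P Q :: "nat \<Rightarrow> bool"
  assumes "\<And>n. P n \<longleftrightarrow> c \<le> n \<and> Q (n - c)" and "\<exists>m. Q m"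
  shows "(LEAST n. P n) = c + (LEAST m. Q m)"
proof (rule Least_equality)
  show "P (c + (LEAST m. Q m))"
    using assms LeastI_ex[OF assms(2)] by simp
  show "c + (LEAST m. Q m) \<le> y" if "P y" for y
    using that assms Least_le[of Q "y - c"] by force
qed

lemma waiting_time_heads_tail_shift:
  assumes "i < k"
  shows "waiting_time k (replicate i True @- False ## \<omega>) = ennreal (real (Suc i)) + waiting_time k \<omega>"
proof (cases "\<exists>m. heads_run_ends_at k m \<omega>")
  case True
  then have "\<exists>n. heads_run_ends_at k n (replicate i True @- False ## \<omega>)"
    using heads_run_ends_at_heads_tail_shift[OF assms] by (metis add_diff_cancel_right' le_add2)
  moreover have "run_time k (replicate i True @- False ## \<omega>) = Suc i + run_time k \<omega>"
    unfolding run_time_eq_Least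
    by (rule Least_eq_add_Least[OF heads_run_ends_at_heads_tail_shift[OF assms] True])
  ultimately show ?thesis
    using True by (simp add: waiting_time_def ennreal_plus[symmetric] del: ennreal_plus)
next
  case False
  then show ?thesis
    using heads_run_ends_at_heads_tail_shift[OF assms] by (auto simp: waiting_time_def)
qed

lemma waiting_time_heads_shift: "waiting_time k (replicate k True @- \<omega>) = ennreal (real k)"
proof -
  have run: "heads_run_ends_at k k (replicate k True @- \<omega>)"
    by (simp add: heads_run_ends_at_def shift_snth)
  then have "run_time k (replicate k True @- \<omega>) = k"
    unfolding run_time_eq_Least by (rule Least_equality) (simp add: heads_run_ends_at_def)
  then show ?thesis
    using run by (auto simp: waiting_time_def)
qed

lemma nn_integral_waiting_time_first_step:
  assumes "0 \<le> p" "p \<le> 1" and [measurable]: "h \<in> borel_measurable borel"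
  shows "(\<integral>\<^sup>+\<omega>. h (waiting_time k \<omega>) \<partial>coin_space p) =
    (\<Sum>i<k. ennreal (p ^ i * (1 - p)) *
       (\<integral>\<^sup>+\<omega>. h (ennreal (real (Suc i)) + waiting_time k \<omega>) \<partial>coin_space p))
    + ennreal (p ^ k) * h (ennreal (real k))"
proof -
  interpret prob_space "coin_space p" by (rule prob_space_coin_space)
  show ?thesis
    by (subst nn_integral_coin_space_heads_prefix[OF assms(1,2), of _ k])
       (simp_all add: waiting_time_heads_tail_shift waiting_time_heads_shift emeasure_space_1)
qed

text \<open>\<open>first_tail_moment p k r\<close> is E (\<tau>^r; \<tau> \<le> k) for the position \<tau> of the first tail.\<close>

definition first_tail_moment :: "real \<Rightarrow> nat \<Rightarrow> nat \<Rightarrow> real" where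
  "first_tail_moment p k r = (\<Sum>i<k. p ^ i * (1 - p) * real (Suc i) ^ r)"

definition moment_rest :: "real \<Rightarrow> nat \<Rightarrow> (nat \<Rightarrow> ennreal) \<Rightarrow> nat \<Rightarrow> ennreal" where
  "moment_rest p k X m = ennreal (p ^ k * real k ^ m)
    + (\<Sum>l<m. ennreal (real (m choose l) * first_tail_moment p k (m - l)) * X l)"

lemma first_tail_moment_0: "first_tail_moment p k 0 = 1 - p ^ k"
  unfolding first_tail_moment_def by (induction k) (auto simp: algebra_simps)

lemma first_tail_moment_nonneg: "0 \<le> p \<Longrightarrow> p \<le> 1 \<Longrightarrow> 0 \<le> first_tail_moment p k r"
  unfolding first_tail_moment_def by (intro sum_nonneg) auto

lemma moment_rest_mono:
  "(\<And>l. l < m \<Longrightarrow> X l \<le> Y l) \<Longrightarrow> moment_rest p k X m \<le> moment_rest p k Y m"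
  unfolding moment_rest_def by (intro add_mono sum_mono mult_left_mono) auto

lemma moment_rest_ennreal:
  assumes "0 \<le> p" "p \<le> 1" and "\<And>l. 0 \<le> a l"
  shows "moment_rest p k (\<lambda>l. ennreal (a l)) m = ennreal (p ^ k * real k ^ m
    + (\<Sum>l<m. real (m choose l) * first_tail_moment p k (m - l) * a l))"
proof -
  have terms: "ennreal (real (m choose l) * first_tail_moment p k (m - l)) * ennreal (a l)
      = ennreal (real (m choose l) * first_tail_moment p k (m - l) * a l)" for l
    using assms first_tail_moment_nonneg[OF assms(1,2)] by (simp add: ennreal_mult)
  show ?thesis
    unfolding moment_rest_def terms
    using assms first_tail_moment_nonneg[OF assms(1,2)]
    by (simp add: sum_nonneg)
qed

lemma nn_integral_add_const_power:
  assumes [measurable]: "f \<in> borel_measurable M" and "0 \<le> a"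
  shows "(\<integral>\<^sup>+\<omega>. (ennreal a + f \<omega>) ^ m \<partial>M) =
    (\<Sum>l\<le>m. ennreal (real (m choose l) * a ^ (m - l)) * (\<integral>\<^sup>+\<omega>. f \<omega> ^ l \<partial>M))"
proof -
  have "(ennreal a + f \<omega>) ^ m = (\<Sum>l\<le>m. ennreal (real (m choose l) * a ^ (m - l)) * f \<omega> ^ l)"
    for \<omega>
    unfolding add.commute[of "ennreal a"] binomial_ring
    using \<open>0 \<le> a\<close> by (intro sum.cong)
      (simp_all add: ennreal_mult ennreal_power ennreal_of_nat_eq_real_of_nat mult_ac)
  then show ?thesis
    by (simp add: nn_integral_sum nn_integral_cmult)
qed

lemma first_step_moment_expansion:
  assumes "0 \<le> p" "p \<le> 1" and [measurable]: "f \<in> borel_measurable M"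
  shows "(\<Sum>i<k. ennreal (p ^ i * (1 - p)) * (\<integral>\<^sup>+\<omega>. (ennreal (real (Suc i)) + f \<omega>) ^ m \<partial>M))
      + ennreal (p ^ k) * ennreal (real k) ^ m
    = ennreal (1 - p ^ k) * (\<integral>\<^sup>+\<omega>. f \<omega> ^ m \<partial>M) + moment_rest p k (\<lambda>l. \<integral>\<^sup>+\<omega>. f \<omega> ^ l \<partial>M) m"
proof -
  let ?I = "\<lambda>l. \<integral>\<^sup>+\<omega>. f \<omega> ^ l \<partial>M"
  have binomial: "(\<integral>\<^sup>+\<omega>. (ennreal (real (Suc i)) + f \<omega>) ^ m \<partial>M) =
      (\<Sum>l\<le>m. ennreal (real (m choose l) * real (Suc i) ^ (m - l)) * ?I l)" for i
    by (rule nn_integral_add_const_power) auto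
  have "(\<Sum>i<k. ennreal (p ^ i * (1 - p)) * (\<integral>\<^sup>+\<omega>. (ennreal (real (Suc i)) + f \<omega>) ^ m \<partial>M))
      = (\<Sum>l\<le>m. (\<Sum>i<k. ennreal (p ^ i * (1 - p) * (real (m choose l) * real (Suc i) ^ (m - l)))) * ?I l)"
    unfolding binomial sum_distrib_left sum_distrib_right sum.swap[of _ "{..<k}"]
    using assms(1,2) by (simp add: ennreal_mult' mult.assoc)
  also have "\<dots> = (\<Sum>l\<le>m. ennreal (real (m choose l) * first_tail_moment p k (m - l)) * ?I l)"
    using assms(1,2)
    by (simp add: sum_ennreal first_tail_moment_def sum_distrib_left mult_ac)
  also have "\<dots> = ennreal (1 - p ^ k) * ?I m
      + (\<Sum>l<m. ennreal (real (m choose l) * first_tail_moment p k (m - l)) * ?I l)"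
    by (simp add: lessThan_Suc_atMost[symmetric] first_tail_moment_0 add.commute)
  finally show ?thesis
    using assms by (simp add: moment_rest_def ennreal_mult ennreal_power add_ac)
qed

definition waiting_time_moment :: "real \<Rightarrow> nat \<Rightarrow> nat \<Rightarrow> ennreal" where
  "waiting_time_moment p k m = (\<integral>\<^sup>+\<omega>. waiting_time k \<omega> ^ m \<partial>coin_space p)"

lemma waiting_time_moment_0: "waiting_time_moment p k 0 = 1"
proof -
  interpret prob_space "coin_space p" by (rule prob_space_coin_space)
  show ?thesis by (simp add: waiting_time_moment_def emeasure_space_1)
qed

lemma waiting_time_moment_eq:
  assumes "0 \<le> p" "p \<le> 1"
  shows "waiting_time_moment p k m =
    ennreal (1 - p ^ k) * waiting_time_moment p k m + moment_rest p k (waiting_time_moment p k) m"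
  unfolding waiting_time_moment_def
  using nn_integral_waiting_time_first_step[OF assms, of "\<lambda>x. x ^ m"]
    first_step_moment_expansion[OF assms measurable_waiting_time]
  by (simp add: waiting_time_moment_def)

lemma min_add_le_add_min: "min (a + y) N \<le> a + min y (N :: ennreal)"
  by (cases "y \<le> N") (auto simp: min_def add_increasing)

definition truncated_waiting_time_moment :: "real \<Rightarrow> nat \<Rightarrow> nat \<Rightarrow> nat \<Rightarrow> ennreal" where
  "truncated_waiting_time_moment p k N m =
    (\<integral>\<^sup>+\<omega>. min (waiting_time k \<omega>) (of_nat N) ^ m \<partial>coin_space p)"

lemma truncated_waiting_time_moment_le:
  assumes "0 \<le> p" "p \<le> 1"
  shows "truncated_waiting_time_moment p k N m \<le>
    ennreal (1 - p ^ k) * truncated_waiting_time_moment p k N m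
    + moment_rest p k (truncated_waiting_time_moment p k N) m"
proof -
  have "truncated_waiting_time_moment p k N m = (\<Sum>i<k. ennreal (p ^ i * (1 - p)) *
        (\<integral>\<^sup>+\<omega>. min (ennreal (real (Suc i)) + waiting_time k \<omega>) (of_nat N) ^ m \<partial>coin_space p))
      + ennreal (p ^ k) * min (ennreal (real k)) (of_nat N) ^ m"
    unfolding truncated_waiting_time_moment_def
    by (rule nn_integral_waiting_time_first_step[OF assms]) measurable
  also have "\<dots> \<le> (\<Sum>i<k. ennreal (p ^ i * (1 - p)) *
        (\<integral>\<^sup>+\<omega>. (ennreal (real (Suc i)) + min (waiting_time k \<omega>) (of_nat N)) ^ m \<partial>coin_space p))
      + ennreal (p ^ k) * ennreal (real k) ^ m"
    by (intro add_mono sum_mono mult_left_mono nn_integral_mono power_mono min_add_le_add_min) auto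
  also have "\<dots> = ennreal (1 - p ^ k) * truncated_waiting_time_moment p k N m
      + moment_rest p k (truncated_waiting_time_moment p k N) m"
    unfolding truncated_waiting_time_moment_def
    by (rule first_step_moment_expansion[OF assms]) measurable
  finally show ?thesis .
qed

lemma truncated_waiting_time_moment_le_moment:
  "truncated_waiting_time_moment p k N m \<le> waiting_time_moment p k m"
  unfolding truncated_waiting_time_moment_def waiting_time_moment_def
  by (intro nn_integral_mono power_mono) auto

lemma truncated_waiting_time_moment_finite: "truncated_waiting_time_moment p k N m < \<top>"
proof -
  interpret prob_space "coin_space p" by (rule prob_space_coin_space)
  have "truncated_waiting_time_moment p k N m \<le> (\<integral>\<^sup>+\<omega>. of_nat N ^ m \<partial>coin_space p)"
    unfolding truncated_waiting_time_moment_def by (intro nn_integral_mono power_mono) auto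
  then show ?thesis
    by (simp add: emeasure_space_1 ennreal_of_nat_eq_real_of_nat ennreal_power le_less_trans)
qed

lemma ennreal_mult_le_of_le_mult_add:
  fixes x R :: ennreal
  assumes "x < \<top>" "x \<le> ennreal (1 - q) * x + R" "0 \<le> q" "q \<le> 1"
  shows "ennreal q * x \<le> R"
proof (cases "R = \<top>")
  case False
  obtain r s where rs: "x = ennreal r" "0 \<le> r" "R = ennreal s" "0 \<le> s"
    using assms(1) False by (cases x; cases R) auto
  then have "r \<le> (1 - q) * r + s"
    using assms(2-4) by (simp add: ennreal_mult[symmetric] ennreal_plus[symmetric] del: ennreal_plus)
  then show ?thesis
    using rs assms(3) by (simp add: ennreal_mult[symmetric] algebra_simps)
qed simp

lemma SUP_min_of_nat_power: "(SUP N. min y (of_nat N) ^ m) = (y :: ennreal) ^ m"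
proof (rule antisym)
  show "(SUP N. min y (of_nat N) ^ m) \<le> y ^ m"
    by (intro SUP_least power_mono) auto
  show "y ^ m \<le> (SUP N. min y (of_nat N) ^ m)"
  proof (cases "y = \<top> \<and> m \<noteq> 0")
    case True
    have "of_nat N \<le> min y (of_nat N) ^ m" for N
      using True by (cases N) (auto intro: order.trans[OF _ power_increasing[of 1 m]])
    then have "(SUP N. of_nat N :: ennreal) \<le> (SUP N. min y (of_nat N) ^ m)"
      by (intro SUP_mono) auto
    then have "(SUP N. min y (of_nat N) ^ m) = \<top>"
      by (simp add: ennreal_SUP_of_nat_eq_top top_unique)
    then show ?thesis by (metis top_greatest)
  next
    case no_blowup: False
    obtain N where "y ^ m = min y (of_nat N) ^ m"
    proof (cases "y = \<top>")
      case False
      then obtain N where "y < of_nat N"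
        using ennreal_Ex_less_of_nat top.not_eq_extremum by blast
      then show ?thesis using that[of N] by simp
    qed (use no_blowup that[of 0] in simp)
    then show ?thesis by (metis SUP_upper UNIV_I)
  qed
qed

lemma waiting_time_moment_eq_SUP_truncated:
  "waiting_time_moment p k m = (SUP N. truncated_waiting_time_moment p k N m)"
proof -
  have "waiting_time_moment p k m =
      (\<integral>\<^sup>+\<omega>. (SUP N. min (waiting_time k \<omega>) (of_nat N) ^ m) \<partial>coin_space p)"
    by (simp add: waiting_time_moment_def SUP_min_of_nat_power)
  also have "\<dots> = (SUP N. truncated_waiting_time_moment p k N m)"
    unfolding truncated_waiting_time_moment_def
    by (rule nn_integral_monotone_convergence_SUP)
       (auto simp: incseq_def le_fun_def intro!: power_mono min.mono)
  finally show ?thesis .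
qed

lemma waiting_time_moment_finite:
  assumes "0 < p" "p \<le> 1"
  shows "waiting_time_moment p k m < \<top>"
proof (induction m rule: less_induct)
  case (less m)
  let ?R = "moment_rest p k (waiting_time_moment p k) m"
  have pk: "0 < p ^ k" "p ^ k \<le> 1"
    using assms by (auto simp: power_le_one)
  have "ennreal (p ^ k) * truncated_waiting_time_moment p k N m \<le> ?R" for N
  proof (rule ennreal_mult_le_of_le_mult_add)
    have "truncated_waiting_time_moment p k N m \<le>
        ennreal (1 - p ^ k) * truncated_waiting_time_moment p k N m
        + moment_rest p k (truncated_waiting_time_moment p k N) m"
      using assms by (intro truncated_waiting_time_moment_le) auto
    also have "\<dots> \<le> ennreal (1 - p ^ k) * truncated_waiting_time_moment p k N m + ?R"
      by (intro add_left_mono moment_rest_mono truncated_waiting_time_moment_le_moment)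
    finally show "truncated_waiting_time_moment p k N m \<le>
        ennreal (1 - p ^ k) * truncated_waiting_time_moment p k N m + ?R" .
  qed (use pk truncated_waiting_time_moment_finite in auto)
  then have "ennreal (p ^ k) * waiting_time_moment p k m \<le> ?R"
    unfolding waiting_time_moment_eq_SUP_truncated[of p k m] SUP_mult_left_ennreal
    by (intro SUP_least)
  also have "?R < \<top>"
    using less by (simp add: moment_rest_def ennreal_mult_less_top)
  finally show ?case
    using pk assms by (auto simp: ennreal_mult_less_top)
qed

lemma nn_integral_run_time_power:
  assumes "0 < p" "p \<le> 1"
  shows "(\<integral>\<^sup>+\<omega>. ennreal (real (run_time k \<omega>) ^ m) \<partial>coin_space p) = waiting_time_moment p k m"
proof -
  have "(\<integral>\<^sup>+\<omega>. waiting_time k \<omega> \<partial>coin_space p) \<noteq> \<infinity>"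
    using waiting_time_moment_finite[OF assms, of k 1] by (simp add: waiting_time_moment_def)
  then have "AE \<omega> in coin_space p. waiting_time k \<omega> \<noteq> \<infinity>"
    by (intro nn_integral_PInf_AE) simp_all
  then have "AE \<omega> in coin_space p. ennreal (real (run_time k \<omega>) ^ m) = waiting_time k \<omega> ^ m"
    by eventually_elim (auto simp: waiting_time_def ennreal_power split: if_splits)
  then show ?thesis
    unfolding waiting_time_moment_def by (rule nn_integral_cong_AE)
qed

lemma waiting_time_moment_recurrence:
  assumes "0 < p" "p \<le> 1"
  shows "p ^ k * enn2real (waiting_time_moment p k m) = p ^ k * real k ^ m
    + (\<Sum>l<m. real (m choose l) * first_tail_moment p k (m - l) * enn2real (waiting_time_moment p k l))"
proof -
  define a where "a l = enn2real (waiting_time_moment p k l)" for l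
  have a_nonneg: "0 \<le> a l" for l
    by (simp add: a_def)
  have moment: "waiting_time_moment p k = (\<lambda>l. ennreal (a l))"
    using waiting_time_moment_finite[OF assms] by (simp add: a_def fun_eq_iff)
  define r where "r = p ^ k * real k ^ m
    + (\<Sum>l<m. real (m choose l) * first_tail_moment p k (m - l) * a l)"
  have "0 \<le> r"
    unfolding r_def using assms first_tail_moment_nonneg[of p] a_nonneg
    by (intro add_nonneg_nonneg sum_nonneg mult_nonneg_nonneg) auto
  have "1 - p ^ k \<ge> 0"
    using assms by (simp add: power_le_one)
  have "ennreal (a m) = ennreal (1 - p ^ k) * ennreal (a m) + ennreal r"
    using waiting_time_moment_eq[of p k m] moment_rest_ennreal[of p a k m] assms a_nonneg
    unfolding moment r_def by simp
  also have "\<dots> = ennreal ((1 - p ^ k) * a m + r)"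
    using \<open>0 \<le> r\<close> \<open>1 - p ^ k \<ge> 0\<close> a_nonneg by (simp add: ennreal_mult ennreal_plus)
  finally have "a m = (1 - p ^ k) * a m + r"
    using \<open>0 \<le> r\<close> \<open>1 - p ^ k \<ge> 0\<close> a_nonneg by (subst (asm) ennreal_inj) auto
  then show ?thesis
    unfolding r_def a_def by (simp add: algebra_simps)
qed

text \<open>The closed forms below read E (\<tau>^r; \<tau> \<le> k) = E (\<tau>^r) - p^k E ((k + \<tau>)^r): given that the
  first k flips are heads, \<tau> is distributed as k + \<tau>. The numerators 1, 1 + p, 1 + 4p + p^2,
  1 + 11p + 11p^2 + p^3 of E (\<tau>^r) are the Eulerian polynomials.\<close>

lemma first_tail_moment_1:
  assumes "p \<noteq> 1"
  shows "first_tail_moment p k 1 = 1 / (1 - p) - p ^ k * (real k + 1 / (1 - p))"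
  unfolding first_tail_moment_def
proof (induction k)
  case (Suc k)
  show ?case unfolding sum.lessThan_Suc Suc.IH using assms by (simp add: field_simps)
qed simp

lemma first_tail_moment_2:
  assumes "p \<noteq> 1"
  shows "first_tail_moment p k 2 = (1 + p) / (1 - p) ^ 2
    - p ^ k * (real k ^ 2 + 2 * real k / (1 - p) + (1 + p) / (1 - p) ^ 2)"
  unfolding first_tail_moment_def
proof (induction k)
  case (Suc k)
  show ?case unfolding sum.lessThan_Suc Suc.IH using assms by (simp add: field_simps) algebra
qed (use assms in \<open>simp add: field_simps\<close>)

lemma first_tail_moment_3:
  assumes "p \<noteq> 1"
  shows "first_tail_moment p k 3 = (1 + 4 * p + p ^ 2) / (1 - p) ^ 3
    - p ^ k * (real k ^ 3 + 3 * real k ^ 2 / (1 - p) + 3 * real k * (1 + p) / (1 - p) ^ 2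
      + (1 + 4 * p + p ^ 2) / (1 - p) ^ 3)"
  unfolding first_tail_moment_def
proof (induction k)
  case (Suc k)
  show ?case unfolding sum.lessThan_Suc Suc.IH using assms by (simp add: field_simps) algebra
qed (use assms in \<open>simp add: field_simps\<close>)

lemma first_tail_moment_4:
  assumes "p \<noteq> 1"
  shows "first_tail_moment p k 4 = (1 + 11 * p + 11 * p ^ 2 + p ^ 3) / (1 - p) ^ 4
    - p ^ k * (real k ^ 4 + 4 * real k ^ 3 / (1 - p) + 6 * real k ^ 2 * (1 + p) / (1 - p) ^ 2
      + 4 * real k * (1 + 4 * p + p ^ 2) / (1 - p) ^ 3 + (1 + 11 * p + 11 * p ^ 2 + p ^ 3) / (1 - p) ^ 4)"
  unfolding first_tail_moment_def
proof (induction k)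
  case (Suc k)
  show ?case unfolding sum.lessThan_Suc Suc.IH using assms by (simp add: field_simps) algebra
qed (use assms in \<open>simp add: field_simps\<close>)

text \<open>In the four solutions below p^k is abbreviated to an opaque q, and p is written as 1 - d
  so that field_simps recognises all denominators as products of the nonzero atoms q and d.\<close>

lemma waiting_time_moment_1:
  assumes "0 < p" "p < 1"
  shows "enn2real (waiting_time_moment p k 1) = (1 - p ^ k) / ((1 - p) * p ^ k)"
proof -
  define q d where "q = p ^ k" and "d = 1 - p"
  have nonzero: "q \<noteq> 0" "d \<noteq> 0" and p_eq: "p = 1 - d" and "p \<noteq> 1"
    using assms by (simp_all add: q_def d_def)
  have recurrence: "enn2real (waiting_time_moment p k 1) = (q * real k + first_tail_moment p k 1) / q"
    using waiting_time_moment_recurrence[of p k 1] assms nonzero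
    by (simp add: q_def waiting_time_moment_0 field_simps)
  show ?thesis
    unfolding recurrence first_tail_moment_1[OF \<open>p \<noteq> 1\<close>] q_def[symmetric]
    unfolding p_eq
    using nonzero by (simp add: field_simps)
qed

lemma waiting_time_moment_2:
  assumes "0 < p" "p < 1"
  shows "enn2real (waiting_time_moment p k 2) =
    2 * (1 - p ^ k) / ((1 - p) ^ 2 * (p ^ k) ^ 2) - (2 * real k + 1 - p ^ k) / ((1 - p) * p ^ k)"
proof -
  define q d where "q = p ^ k" and "d = 1 - p"
  have nonzero: "q \<noteq> 0" "d \<noteq> 0" and p_eq: "p = 1 - d" and "p \<noteq> 1"
    using assms by (simp_all add: q_def d_def)
  have recurrence: "enn2real (waiting_time_moment p k 2) = (q * real k ^ 2 + first_tail_moment p k 2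
      + 2 * first_tail_moment p k 1 * enn2real (waiting_time_moment p k 1)) / q"
    using waiting_time_moment_recurrence[of p k 2] assms nonzero
    by (simp add: q_def waiting_time_moment_0 numeral_eq_Suc field_simps)
  show ?thesis
    unfolding recurrence first_tail_moment_1[OF \<open>p \<noteq> 1\<close>]
      first_tail_moment_2[OF \<open>p \<noteq> 1\<close>] waiting_time_moment_1[OF assms]
      q_def[symmetric]
    unfolding p_eq
    using nonzero by (simp add: field_simps) algebra
qed

lemma waiting_time_moment_3:
  assumes "0 < p" "p < 1"
  shows "enn2real (waiting_time_moment p k 3) =
    6 * (1 - p ^ k) / ((1 - p) ^ 3 * (p ^ k) ^ 3)
    - (12 * real k + 6 - (6 * real k + 6) * p ^ k) / ((1 - p) ^ 2 * (p ^ k) ^ 2)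
    + (3 * real k ^ 2 + 3 * real k + 1 - p ^ k) / ((1 - p) * p ^ k)"
proof -
  define q d where "q = p ^ k" and "d = 1 - p"
  have nonzero: "q \<noteq> 0" "d \<noteq> 0" and p_eq: "p = 1 - d" and "p \<noteq> 1"
    using assms by (simp_all add: q_def d_def)
  have recurrence: "enn2real (waiting_time_moment p k 3) = (q * real k ^ 3 + first_tail_moment p k 3
      + 3 * first_tail_moment p k 2 * enn2real (waiting_time_moment p k 1)
      + 3 * first_tail_moment p k 1 * enn2real (waiting_time_moment p k 2)) / q"
    using waiting_time_moment_recurrence[of p k 3] assms nonzero
    by (simp add: q_def waiting_time_moment_0 numeral_eq_Suc field_simps)
  show ?thesis
    unfolding recurrence first_tail_moment_1[OF \<open>p \<noteq> 1\<close>]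
      first_tail_moment_2[OF \<open>p \<noteq> 1\<close>]
      first_tail_moment_3[OF \<open>p \<noteq> 1\<close>]
      waiting_time_moment_1[OF assms] waiting_time_moment_2[OF assms]
      q_def[symmetric]
    unfolding p_eq
    using nonzero by (simp add: field_simps) algebra
qed

lemma waiting_time_moment_4:
  assumes "0 < p" "p < 1"
  shows "enn2real (waiting_time_moment p k 4) =
    24 * (1 - p ^ k) / ((1 - p) ^ 4 * (p ^ k) ^ 4)
    - (72 * real k + 36 - (48 * real k + 36) * p ^ k) / ((1 - p) ^ 3 * (p ^ k) ^ 3)
    + (48 * real k ^ 2 + 48 * real k + 14 - (12 * real k ^ 2 + 24 * real k + 14) * p ^ k)
      / ((1 - p) ^ 2 * (p ^ k) ^ 2)
    - (4 * real k ^ 3 + 6 * real k ^ 2 + 4 * real k + 1 - p ^ k) / ((1 - p) * p ^ k)"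
proof -
  define q d where "q = p ^ k" and "d = 1 - p"
  have nonzero: "q \<noteq> 0" "d \<noteq> 0" and p_eq: "p = 1 - d" and "p \<noteq> 1"
    using assms by (simp_all add: q_def d_def)
  have recurrence: "enn2real (waiting_time_moment p k 4) = (q * real k ^ 4 + first_tail_moment p k 4
      + 4 * first_tail_moment p k 3 * enn2real (waiting_time_moment p k 1)
      + 6 * first_tail_moment p k 2 * enn2real (waiting_time_moment p k 2)
      + 4 * first_tail_moment p k 1 * enn2real (waiting_time_moment p k 3)) / q"
    using waiting_time_moment_recurrence[of p k 4] assms nonzero
    by (simp add: q_def waiting_time_moment_0 numeral_eq_Suc field_simps)
  show ?thesis
    unfolding recurrence first_tail_moment_1[OF \<open>p \<noteq> 1\<close>]
      first_tail_moment_2[OF \<open>p \<noteq> 1\<close>]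
      first_tail_moment_3[OF \<open>p \<noteq> 1\<close>]
      first_tail_moment_4[OF \<open>p \<noteq> 1\<close>]
      waiting_time_moment_1[OF assms] waiting_time_moment_2[OF assms]
      waiting_time_moment_3[OF assms]
      q_def[symmetric]
    unfolding p_eq
    using nonzero by (simp add: field_simps) algebra
qed

lemma sum_inverse_powers:
  fixes p :: real
  assumes "p \<noteq> 0" "p \<noteq> 1"
  shows "(\<Sum>i=1..k. 1 / p ^ i) = (1 - p ^ k) / ((1 - p) * p ^ k)"
proof (induction k)
  case (Suc k)
  then have "(\<Sum>i=1..Suc k. 1 / p ^ i) = (1 - p ^ k) / ((1 - p) * p ^ k) + 1 / p ^ Suc k"
    by (simp add: sum.cl_ivl_Suc)
  also have "\<dots> = (1 - p ^ Suc k) / ((1 - p) * p ^ Suc k)"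
    using assms by (simp add: field_simps)
  finally show ?case .
qed simp

theorem corollary3p2:
  fixes p :: real and k :: nat
  assumes "0 < p" and "p < 1" and "1 \<le> k"
  shows
    "(\<integral>\<^sup>+\<omega>. ennreal (real (run_time k \<omega>)) \<partial>coin_space p)
        = ennreal (\<Sum>i=1..k. 1 / p ^ i)
     \<and> (\<Sum>i=1..k. 1 / p ^ i) = (1 - p ^ k) / ((1 - p) * p ^ k)
     \<and> (\<integral>\<^sup>+\<omega>. ennreal (real (run_time k \<omega>) ^ 2) \<partial>coin_space p)
        = ennreal (2 * (1 - p ^ k) / ((1 - p) ^ 2 * p ^ (2 * k))
                   - (2 * real k + 1 - p ^ k) / ((1 - p) * p ^ k))
     \<and> (\<integral>\<^sup>+\<omega>. ennreal (real (run_time k \<omega>) ^ 3) \<partial>coin_space p)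
        = ennreal (6 * (1 - p ^ k) / ((1 - p) ^ 3 * p ^ (3 * k))
                   - (12 * real k + 6 - (6 * real k + 6) * p ^ k) / ((1 - p) ^ 2 * p ^ (2 * k))
                   + (3 * real k ^ 2 + 3 * real k + 1 - p ^ k) / ((1 - p) * p ^ k))
     \<and> (\<integral>\<^sup>+\<omega>. ennreal (real (run_time k \<omega>) ^ 4) \<partial>coin_space p)
        = ennreal (24 * (1 - p ^ k) / ((1 - p) ^ 4 * p ^ (4 * k))
                   - (72 * real k + 36 - (48 * real k + 36) * p ^ k) / ((1 - p) ^ 3 * p ^ (3 * k))
                   + (48 * real k ^ 2 + 48 * real k + 14 - (12 * real k ^ 2 + 24 * real k + 14) * p ^ k)
                       / ((1 - p) ^ 2 * p ^ (2 * k))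
                   - (4 * real k ^ 3 + 6 * real k ^ 2 + 4 * real k + 1 - p ^ k) / ((1 - p) * p ^ k))"
proof -
  have moment: "(\<integral>\<^sup>+\<omega>. ennreal (real (run_time k \<omega>) ^ m) \<partial>coin_space p)
      = ennreal (enn2real (waiting_time_moment p k m))" for m
    using assms(1,2) waiting_time_moment_finite[of p k m] by (simp add: nn_integral_run_time_power)
  have powers: "p ^ (2 * k) = (p ^ k) ^ 2" "p ^ (3 * k) = (p ^ k) ^ 3" "p ^ (4 * k) = (p ^ k) ^ 4"
    by (simp_all add: power_mult[symmetric] mult.commute)
  show ?thesis
    unfolding powers
    using moment[of 1] moment[of 2] moment[of 3] moment[of 4]
      waiting_time_moment_1[OF assms(1,2)] waiting_time_moment_2[OF assms(1,2)]
      waiting_time_moment_3[OF assms(1,2)] waiting_time_moment_4[OF assms(1,2)]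
      sum_inverse_powers[of p k] assms(1,2)
    by simp
qed

end
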